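(* Let $\mathbb{M}(\mathbb{B})=\{F_A:A\in\mathrm{Sp}(1,1)\}$ and $\mathcal{M}(\mathbb{B})=\{\mathcal{F}_A:A\in\mathrm{Sp}(1,1)\}$. The set $\mathbb{M}(\mathbb{B})\cap\mathcal{M}(\mathbb{B})$ is the collection of transformations given by the following actions: (1) the right action of $\mathrm{SO}_0(1,1)$ on $\mathbb{B}$ by classical Möbius transformations, $q\mapsto F_{H}(q)$ for $H\in\mathrm{SO}_0(1,1)$; (2) the right action of $\mathrm{Sp}(1)$ on $\mathbb{B}$ given by $q\cdot u=qu$. That is, $\mathbb{M}(\mathbb{B})\cap\mathcal{M}(\mathbb{B})=\{q\mapsto F_H(q)u: H\in\mathrm{SO}_0(1,1),\ u\in\mathrm{Sp}(1)\}$.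
   Context: $\mathbb{H}$ denotes the quaternions, $\mathbb{B}=\{q\in\mathbb{H}:|q|<1\}$, $\mathrm{Sp}(1)=\{u\in\mathbb{H}:|u|=1\}$. Let $I_{1,1}=\operatorname{diag}(1,-1)$ and $\mathrm{Sp}(1,1)=\{A\in M_2(\mathbb{H}):A^*I_{1,1}A=I_{1,1}\}$. For $t\in\mathbb{R}$, $H(t)=\begin{pmatrix}\cosh t&\sinh t\\ \sinh t&\cosh t\end{pmatrix}$ and $\mathrm{SO}_0(1,1)=\{H(t):t\in\mathbb{R}\}$. For $A=\begin{pmatrix}a&c\\ b&d\end{pmatrix}\in\mathrm{Sp}(1,1)$, the classical Möbius transformation is $F_A(q)=(qc+d)^{-1}(qa+b)$. Slice regular functions on $\mathbb{B}$ are exactly the functions $f(q)=\sum_{n\ge0}q^na_n$ ($a_n\in\mathbb{H}$) with the series converging on $\mathbb{B}$. The $*$-product is $(\sum q^na_n)*(\sum q^nb_n)=\sum_n q^n\sum_{k=0}^n a_kb_{n-k}$; $f^c(q)=\sum q^n\overline{a_n}$, $f^s=f*f^c$, $f^{-*}=(f^s)^{-1}f^c$ (pointwise, off the zero set of $f^s$). For $a,b\in\mathbb{H}$ let $\ell_{a,b}(q)=qa+b$. For $A=\begin{pmatrix}a&c\\ b&d\end{pmatrix}\in\mathrm{Sp}(1,1)$, the regular Möbius transformation is $\mathcal{F}_A=\ell_{c,d}^{-*}*\ell_{a,b}$, which maps $\mathbb{B}$ diffeomorphically onto $\mathbb{B}$. *)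

theory Defs
  imports "HOL-Analysis.Analysis"
begin

datatype quat = Quat (qRe: real) (qI: real) (qJ: real) (qK: real)

lemma quat_eqI: "qRe x = qRe y \<Longrightarrow> qI x = qI y \<Longrightarrow> qJ x = qJ y \<Longrightarrow> qK x = qK y \<Longrightarrow> x = y"
  by (cases x; cases y) auto

lemma quat_eq_iff: "x = y \<longleftrightarrow> qRe x = qRe y \<and> qI x = qI y \<and> qJ x = qJ y \<and> qK x = qK y"
  by (auto intro: quat_eqI)

instantiation quat :: ab_group_add
begin
definition "0 = Quat 0 0 0 0"
definition "x + y = Quat (qRe x + qRe y) (qI x + qI y) (qJ x + qJ y) (qK x + qK y)"
definition "- x = Quat (- qRe x) (- qI x) (- qJ x) (- qK x)"
definition "x - y = Quat (qRe x - qRe y) (qI x - qI y) (qJ x - qJ y) (qK x - qK y)"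
lemma quat_add_sel[simp]:
  "qRe 0 = 0" "qI 0 = 0" "qJ 0 = 0" "qK 0 = 0"
  "qRe (x + y) = qRe x + qRe y" "qI (x + y) = qI x + qI y" "qJ (x + y) = qJ x + qJ y" "qK (x + y) = qK x + qK y"
  "qRe (- x) = - qRe x" "qI (- x) = - qI x" "qJ (- x) = - qJ x" "qK (- x) = - qK x"
  "qRe (x - y) = qRe x - qRe y" "qI (x - y) = qI x - qI y" "qJ (x - y) = qJ x - qJ y" "qK (x - y) = qK x - qK y"
  by (simp_all add: zero_quat_def plus_quat_def uminus_quat_def minus_quat_def)
instance by standard (simp_all add: quat_eq_iff)
end

instantiation quat :: real_vector
begin
definition "scaleR r x = Quat (r * qRe x) (r * qI x) (r * qJ x) (r * qK x)"
lemma quat_scaleR_sel[simp]: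
  "qRe (scaleR r x) = r * qRe x" "qI (scaleR r x) = r * qI x"
  "qJ (scaleR r x) = r * qJ x" "qK (scaleR r x) = r * qK x"
  by (simp_all add: scaleR_quat_def)
instance by standard (simp_all add: quat_eq_iff algebra_simps)
end

instantiation quat :: ring_1
begin
definition "1 = Quat 1 0 0 0"
definition "x * y = Quat
  (qRe x * qRe y - qI x * qI y - qJ x * qJ y - qK x * qK y)
  (qRe x * qI y + qI x * qRe y + qJ x * qK y - qK x * qJ y)
  (qRe x * qJ y - qI x * qK y + qJ x * qRe y + qK x * qI y)
  (qRe x * qK y + qI x * qJ y - qJ x * qI y + qK x * qRe y)"
lemma quat_mult_sel[simp]:
  "qRe 1 = 1" "qI 1 = 0" "qJ 1 = 0" "qK 1 = 0"
  "qRe (x * y) = qRe x * qRe y - qI x * qI y - qJ x * qJ y - qK x * qK y"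
  "qI (x * y) = qRe x * qI y + qI x * qRe y + qJ x * qK y - qK x * qJ y"
  "qJ (x * y) = qRe x * qJ y - qI x * qK y + qJ x * qRe y + qK x * qI y"
  "qK (x * y) = qRe x * qK y + qI x * qJ y - qJ x * qI y + qK x * qRe y"
  by (simp_all add: one_quat_def times_quat_def)
instance by standard (simp_all add: quat_eq_iff algebra_simps)
end

instantiation quat :: division_ring
begin
definition "inverse (x::quat) = (let n = (qRe x)\<^sup>2 + (qI x)\<^sup>2 + (qJ x)\<^sup>2 + (qK x)\<^sup>2 in
  Quat (qRe x / n) (- qI x / n) (- qJ x / n) (- qK x / n))"
definition "x div (y::quat) = x * inverse y"
instance
proof
  fix x y :: quat
  assume "x \<noteq> 0"
  then have n: "(qRe x)\<^sup>2 + (qI x)\<^sup>2 + (qJ x)\<^sup>2 + (qK x)\<^sup>2 \<noteq> 0"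
    by (simp add: quat_eq_iff add_nonneg_eq_0_iff)
  define n where "n = (qRe x)\<^sup>2 + (qI x)\<^sup>2 + (qJ x)\<^sup>2 + (qK x)\<^sup>2"
  have n0: "n \<noteq> 0" using n by (simp add: n_def)
  have inv: "inverse x = scaleR (1/n) (Quat (qRe x) (- qI x) (- qJ x) (- qK x))"
    by (simp add: inverse_quat_def n_def Let_def quat_eq_iff)
  have c1: "Quat (qRe x) (- qI x) (- qJ x) (- qK x) * x = Quat n 0 0 0"
    by (simp add: quat_eq_iff n_def power2_eq_square algebra_simps)
  have c2: "x * Quat (qRe x) (- qI x) (- qJ x) (- qK x) = Quat n 0 0 0"
    by (simp add: quat_eq_iff n_def power2_eq_square algebra_simps)
  have e: "qRe x * qRe x / n + qI x * qI x / n + qJ x * qJ x / n + qK x * qK x / n = 1"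
    using n0 by (simp add: n_def power2_eq_square flip: add_divide_distrib)
  show "inverse x * x = 1" "x * inverse x = 1"
    using e by (simp_all add: inv quat_eq_iff algebra_simps)
next
  show "inverse (0::quat) = 0" by (simp add: inverse_quat_def quat_eq_iff)
qed (simp add: divide_quat_def)
end

instantiation quat :: real_normed_div_algebra
begin
definition "norm (x::quat) = sqrt ((qRe x)\<^sup>2 + (qI x)\<^sup>2 + (qJ x)\<^sup>2 + (qK x)\<^sup>2)"
definition "sgn (x::quat) = x /\<^sub>R norm x"
definition "dist (x::quat) y = norm (x - y)"
definition [code del]: "(uniformity :: (quat \<times> quat) filter) = (INF e\<in>{0 <..}. principal {(x, y). dist x y < e})"
definition [code del]: "open (U :: quat set) \<longleftrightarrow> (\<forall>x\<in>U. eventually (\<lambda>(x', y). x' = x \<longrightarrow> y \<in> U) uniformity)"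
instance
proof
  fix x y :: quat and r :: real
  show "norm x = 0 \<longleftrightarrow> x = 0"
    by (simp add: norm_quat_def quat_eq_iff add_nonneg_eq_0_iff)
  show "norm (x + y) \<le> norm x + norm y"
  proof -
    have h: "norm (z::quat) = norm ((qRe z, qI z), (qJ z, qK z))" for z
      by (simp add: norm_quat_def norm_Pair add.assoc)
    have "((qRe (x+y), qI (x+y)), (qJ (x+y), qK (x+y))) = ((qRe x, qI x), (qJ x, qK x)) + ((qRe y, qI y), (qJ y, qK y))"
      by simp
    then show ?thesis
      using norm_triangle_ineq[of "((qRe x, qI x), (qJ x, qK x))" "((qRe y, qI y), (qJ y, qK y))"]
      by (simp only: h)
  qed
  show "norm (scaleR r x) = \<bar>r\<bar> * norm x"
    by (simp add: norm_quat_def power_mult_distrib flip: distrib_left real_sqrt_abs real_sqrt_mult)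
  show "norm (x * y) = norm x * norm y"
    by (simp add: norm_quat_def flip: real_sqrt_mult) (simp add: power2_eq_square algebra_simps)
  show "(scaleR r x) * y = scaleR r (x * y)" "x * scaleR r y = scaleR r (x * y)"
    by (simp_all add: quat_eq_iff algebra_simps)
qed (simp_all add: sgn_quat_def dist_quat_def uniformity_quat_def open_quat_def)
end


definition qcnj :: "quat \<Rightarrow> quat" where
  "qcnj x = Quat (qRe x) (- qI x) (- qJ x) (- qK x)"

definition qof_real :: "real \<Rightarrow> quat" where
  "qof_real r = Quat r 0 0 0"

section \<open>2x2 quaternionic matrices, stored row-major as (m11, m12, m21, m22).
  The paper's matrix A = [[a, c], [b, d]] is the tuple (a, c, b, d).\<close>

type_synonym qmat2 = "quat \<times> quat \<times> quat \<times> quat"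

fun qmat_mult :: "qmat2 \<Rightarrow> qmat2 \<Rightarrow> qmat2" where
  "qmat_mult (a11, a12, a21, a22) (b11, b12, b21, b22) =
     (a11 * b11 + a12 * b21, a11 * b12 + a12 * b22,
      a21 * b11 + a22 * b21, a21 * b12 + a22 * b22)"

fun qmat_star :: "qmat2 \<Rightarrow> qmat2" where
  "qmat_star (a11, a12, a21, a22) = (qcnj a11, qcnj a21, qcnj a12, qcnj a22)"

definition I11 :: qmat2 where
  "I11 = (1, 0, 0, - 1)"

definition Sp11 :: "qmat2 set" where
  "Sp11 = {A. qmat_mult (qmat_star A) (qmat_mult I11 A) = I11}"

definition Hmat :: "real \<Rightarrow> qmat2" where
  "Hmat t = (qof_real (cosh t), qof_real (sinh t), qof_real (sinh t), qof_real (cosh t))"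

fun classical_mobius :: "qmat2 \<Rightarrow> quat \<Rightarrow> quat" where
  "classical_mobius (a, c, b, d) q = inverse (q * c + d) * (q * a + b)"

definition sr_eval :: "(nat \<Rightarrow> quat) \<Rightarrow> quat \<Rightarrow> quat" where
  "sr_eval a q = (\<Sum>n. q ^ n * a n)"

definition slice_regular_B :: "(nat \<Rightarrow> quat) \<Rightarrow> bool" where
  "slice_regular_B a \<longleftrightarrow> (\<forall>q. norm q < 1 \<longrightarrow> summable (\<lambda>n. q ^ n * a n))"

definition star_prod :: "(nat \<Rightarrow> quat) \<Rightarrow> (nat \<Rightarrow> quat) \<Rightarrow> nat \<Rightarrow> quat" where
  "star_prod a b n = (\<Sum>k\<le>n. a k * b (n - k))"

definition sr_cnj :: "(nat \<Rightarrow> quat) \<Rightarrow> nat \<Rightarrow> quat" where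
  "sr_cnj a n = qcnj (a n)"

definition sr_sym :: "(nat \<Rightarrow> quat) \<Rightarrow> nat \<Rightarrow> quat" where
  "sr_sym a = star_prod a (sr_cnj a)"

definition star_inv :: "(nat \<Rightarrow> quat) \<Rightarrow> nat \<Rightarrow> quat" where
  "star_inv a = (SOME g. slice_regular_B g \<and>
      (\<forall>q. norm q < 1 \<and> sr_eval (sr_sym a) q \<noteq> 0 \<longrightarrow>
           sr_eval g q = inverse (sr_eval (sr_sym a) q) * sr_eval (sr_cnj a) q))"

definition lin_coeffs :: "quat \<Rightarrow> quat \<Rightarrow> nat \<Rightarrow> quat" where
  "lin_coeffs a b n = (if n = 0 then b else if n = 1 then a else 0)"

fun regular_mobius :: "qmat2 \<Rightarrow> quat \<Rightarrow> quat" where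
  "regular_mobius (a, c, b, d) = sr_eval (star_prod (star_inv (lin_coeffs c d)) (lin_coeffs a b))"

end

(*
  If F_A agrees on the unit ball with a regular Moebius transformation, it is given there by a
  power series sum q^n h_n. Restricting to the real line through a point q and comparing
  coefficients in (q c + d) F_A(q) = q a + b gives d h_0 = b, d q h_1 + q c h_0 = q a and
  d q^2 h_2 + q c q h_1 = 0 for all small q. In Sp(1,1) one has |a| > |b| and |d| > |c|, which
  forces h_1 <> 0; hence d, and then c, commute with all small quaternions and are real. The
  defining relations of Sp(1,1) then make A a real multiple of H(t) diag(u, 1) with |u| = 1.
  Conversely, for real c and d the symmetrization of l_{c,d} is (q c + d)^2, so the regular
  reciprocal of l_{c,d} is (q c + d)^{-1}, which commutes with q: the regular and the classical
  transformations coincide.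
*)
theory Submission
  imports Defs "HOL-Computational_Algebra.Formal_Power_Series"
begin

instance quat :: banach
proof
  fix X :: "nat \<Rightarrow> quat" assume C: "Cauchy X"
  define h where "h z = ((qRe z, qI z), (qJ z, qK z))" for z
  define k where "k p = Quat (fst (fst p)) (snd (fst p)) (fst (snd p)) (snd (snd p))"
    for p :: "(real \<times> real) \<times> (real \<times> real)"
  have dist_h: "dist (h x) (h y) = dist x y" for x y
    by (simp add: h_def dist_norm norm_quat_def norm_Pair add.assoc)
  have "Cauchy (\<lambda>n. h (X n))" using C by (simp add: Cauchy_def dist_h)
  then obtain P where "(\<lambda>n. h (X n)) \<longlonglongrightarrow> P"
    using Cauchy_convergent_iff convergent_def by blast
  moreover have "dist (X n) (k P) = dist (h (X n)) P" for n
    using dist_h[of "X n" "k P"] by (simp add: h_def k_def)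
  ultimately have "X \<longlonglongrightarrow> k P" by (simp add: tendsto_iff)
  then show "convergent X" by (auto simp: convergent_def)
qed

lemma quat_of_real_sel [simp]:
  "qRe (of_real r) = r" "qI (of_real r) = 0" "qJ (of_real r) = 0" "qK (of_real r) = 0"
  by (simp_all add: of_real_def)

lemma qof_real_eq_of_real: "qof_real r = of_real r"
  by (simp add: qof_real_def quat_eq_iff)

lemma qcnj_sel [simp]:
  "qRe (qcnj x) = qRe x" "qI (qcnj x) = - qI x" "qJ (qcnj x) = - qJ x" "qK (qcnj x) = - qK x"
  by (simp_all add: qcnj_def)

lemma qcnj_mult_self: "qcnj x * x = of_real ((norm x)\<^sup>2)"
  by (simp add: quat_eq_iff norm_quat_def power2_eq_square algebra_simps)

lemma quat_in_Reals_iff: "x \<in> \<real> \<longleftrightarrow> qI x = 0 \<and> qJ x = 0 \<and> qK x = 0"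
proof
  assume "qI x = 0 \<and> qJ x = 0 \<and> qK x = 0"
  then have "x = of_real (qRe x)" by (simp add: quat_eq_iff)
  then show "x \<in> \<real>" by (metis Reals_of_real)
qed (auto elim: Reals_cases)

lemma Reals_mult_commute:
  fixes x y :: "'a::real_algebra_1"
  assumes "x \<in> \<real>"
  shows "x * y = y * x"
  using assms by (cases rule: Reals_cases) (simp add: of_real_def)

lemma quat_in_Reals_if_commute:
  assumes "\<And>q :: quat. norm q < 1 \<Longrightarrow> x * q = q * x"
  shows "x \<in> \<real>"
proof -
  have "norm (Quat 0 (1/2) 0 0) < 1" "norm (Quat 0 0 (1/2) 0) < 1"
    by (simp_all add: norm_quat_def power2_eq_square real_sqrt_lt_1_iff)
  then show ?thesis
    using assms by (force simp: quat_in_Reals_iff quat_eq_iff)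
qed

lemma real_powser_eq_0:
  fixes v :: "nat \<Rightarrow> real"
  assumes s: "s > 0" and sums0: "\<And>t. \<bar>t\<bar> < s \<Longrightarrow> (\<lambda>n. v n * t ^ n) sums 0"
  shows "v n = 0"
proof (induction n rule: less_induct)
  case (less n)
  have "(\<lambda>i. v (i + n) * t ^ i) sums 0" if t: "t \<noteq> 0" "norm t < s" for t
  proof -
    have "(\<lambda>i. v (i + n) * t ^ (i + n)) sums 0"
      using sums_iff_shift[of "\<lambda>i. v i * t ^ i" n 0] sums0[of t] t less by simp
    then have "(\<lambda>i. inverse (t ^ n) * (v (i + n) * t ^ (i + n))) sums 0"
      using sums_mult by fastforce
    then show ?thesis using t by (simp add: power_add field_simps)
  qed
  then have "((\<lambda>t::real. 0::real) \<longlongrightarrow> v n) (at 0)"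
    using powser_limit_0_strong[OF s, of "\<lambda>i. v (i + n)" "\<lambda>t. 0"] by simp
  then show ?case by (metis LIM_const_eq)
qed

lemma quat_powser_eq_0:
  fixes v :: "nat \<Rightarrow> quat"
  assumes s: "s > 0" and sums0: "\<And>t. \<bar>t\<bar> < s \<Longrightarrow> (\<lambda>n. of_real t ^ n * v n) sums 0"
  shows "v n = 0"
proof -
  have component: "f (v n) = 0"
    if "bounded_linear f" and scale: "\<And>r x. f (of_real r * x) = r * f x" for f :: "quat \<Rightarrow> real"
  proof (rule real_powser_eq_0[OF s])
    fix t :: real assume "\<bar>t\<bar> < s"
    from bounded_linear.sums[OF \<open>bounded_linear f\<close> sums0[OF this]]
    show "(\<lambda>n. f (v n) * t ^ n) sums 0"
      using scale[of 0 0] by (simp add: scale mult.commute flip: of_real_power)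
  qed
  have "bounded_linear (\<lambda>x. qRe x)" "bounded_linear (\<lambda>x. qI x)"
    "bounded_linear (\<lambda>x. qJ x)" "bounded_linear (\<lambda>x. qK x)"
    by (auto intro!: bounded_linear_intro[where K = 1]
        simp: norm_quat_def real_le_rsqrt abs_le_square_iff power2_eq_square)
  from component[OF this(1)] component[OF this(2)] component[OF this(3)] component[OF this(4)]
  show ?thesis by (simp add: quat_eq_iff)
qed

lemma powser_shift_sums:
  fixes x :: "'a::real_normed_algebra_1"
  assumes "(\<lambda>n. x ^ n * f n) sums F"
  shows "(\<lambda>n. if k \<le> n then x ^ n * f (n - k) else 0) sums (x ^ k * F)"
proof -
  have "(\<lambda>n. x ^ k * (x ^ n * f n)) sums (x ^ k * F)"
    using sums_mult[OF assms] .
  then show ?thesis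
    using sums_iff_shift[of "\<lambda>n. if k \<le> n then x ^ n * f (n - k) else 0" k]
    by (simp add: power_add mult.assoc add.commute[of _ k])
qed

lemma powser_finite_sums:
  fixes x :: "'a::real_normed_algebra_1"
  assumes "\<forall>k>N. a k = 0"
  shows "(\<lambda>n. x ^ n * a n) sums (\<Sum>k\<le>N. x ^ k * a k)"
  by (rule sums_finite) (use assms in \<open>auto simp: not_le\<close>)

lemma star_prod_finite_left:
  assumes "\<forall>k>N. a k = 0"
  shows "star_prod a g n = (\<Sum>k\<le>N. if k \<le> n then a k * g (n - k) else 0)"
proof -
  have "star_prod a g n = (\<Sum>k\<le>n + N. if k \<le> n then a k * g (n - k) else 0)"
    unfolding star_prod_def by (rule sum.mono_neutral_cong_left) auto
  also have "\<dots> = (\<Sum>k\<le>N. if k \<le> n then a k * g (n - k) else 0)"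
    by (rule sum.mono_neutral_cong_right) (auto simp: assms)
  finally show ?thesis .
qed

lemma star_prod_finite_right:
  assumes "\<forall>k>N. b k = 0"
  shows "star_prod g b n = (\<Sum>k\<le>N. if k \<le> n then g (n - k) * b k else 0)"
proof -
  have "star_prod g b n = (\<Sum>k\<le>n. g (n - k) * b k)"
    unfolding star_prod_def atLeast0AtMost[symmetric] by (subst sum.atLeastAtMost_rev) simp
  also have "\<dots> = (\<Sum>k\<le>n + N. if k \<le> n then g (n - k) * b k else 0)"
    by (rule sum.mono_neutral_cong_left) auto
  also have "\<dots> = (\<Sum>k\<le>N. if k \<le> n then g (n - k) * b k else 0)"
    by (rule sum.mono_neutral_cong_right) (auto simp: assms)
  finally show ?thesis .
qed

lemma star_prod_sums_left:
  fixes x :: quat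
  assumes g: "(\<lambda>n. x ^ n * g n) sums G" and a: "\<forall>k>N. a k = 0"
    and comm: "\<And>k. a k * x = x * a k"
  shows "(\<lambda>n. x ^ n * star_prod a g n) sums ((\<Sum>k\<le>N. x ^ k * a k) * G)"
proof -
  have comm_power: "x ^ n * a k = a k * x ^ n" for k n
    using power_commuting_commutes[OF comm[symmetric]] by simp
  have "(\<lambda>n. \<Sum>k\<le>N. a k * (if k \<le> n then x ^ n * g (n - k) else 0))
      sums (\<Sum>k\<le>N. a k * (x ^ k * G))"
    by (intro sums_sum sums_mult powser_shift_sums g)
  moreover have "x ^ n * star_prod a g n =
      (\<Sum>k\<le>N. a k * (if k \<le> n then x ^ n * g (n - k) else 0))" for n
    unfolding star_prod_finite_left[OF a] sum_distrib_left
    by (rule sum.cong) (simp_all add: comm_power flip: mult.assoc)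
  moreover have "(\<Sum>k\<le>N. a k * (x ^ k * G)) = (\<Sum>k\<le>N. x ^ k * a k) * G"
    by (simp add: sum_distrib_right comm_power flip: mult.assoc)
  ultimately show ?thesis by simp
qed

lemma star_prod_sums_right:
  fixes x :: quat
  assumes g: "(\<lambda>n. x ^ n * g n) sums G" and b: "\<forall>k>N. b k = 0"
  shows "(\<lambda>n. x ^ n * star_prod g b n) sums (\<Sum>k\<le>N. x ^ k * G * b k)"
proof -
  have "(\<lambda>n. \<Sum>k\<le>N. (if k \<le> n then x ^ n * g (n - k) else 0) * b k)
      sums (\<Sum>k\<le>N. x ^ k * G * b k)"
    by (intro sums_sum sums_mult2 powser_shift_sums g)
  moreover have "x ^ n * star_prod g b n =
      (\<Sum>k\<le>N. (if k \<le> n then x ^ n * g (n - k) else 0) * b k)" for n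
    unfolding star_prod_finite_right[OF b] sum_distrib_left
    by (rule sum.cong) (simp_all add: mult.assoc)
  ultimately show ?thesis by simp
qed

lemma lin_coeffs_vanish: "\<forall>k>1. lin_coeffs a b k = 0"
  by (simp add: lin_coeffs_def)

lemma lin_coeffs_sums: "(\<lambda>n. x ^ n * lin_coeffs a b n) sums (b + x * a)"
  using powser_finite_sums[OF lin_coeffs_vanish, of x a b] by (simp add: lin_coeffs_def)

lemma sr_eval_lin_coeffs: "sr_eval (lin_coeffs a b) x = x * a + b"
  using lin_coeffs_sums by (simp add: sr_eval_def sums_iff add.commute)

lemma star_prod_lin_coeffs_left:
  "star_prod (lin_coeffs c d) h n = d * h n + (if n = 0 then 0 else c * h (n - 1))"
  by (simp add: star_prod_finite_left[OF lin_coeffs_vanish] lin_coeffs_def)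

lemma sr_cnj_lin_coeffs: "sr_cnj (lin_coeffs c d) = lin_coeffs (qcnj c) (qcnj d)"
  by (auto simp: sr_cnj_def lin_coeffs_def fun_eq_iff quat_eq_iff)

lemma sr_sym_lin_coeffs:
  "sr_sym (lin_coeffs c d) n =
     (if n = 0 then d * qcnj d else if n = 1 then d * qcnj c + c * qcnj d
      else if n = 2 then c * qcnj c else 0)"
  by (auto simp: sr_sym_def sr_cnj_lin_coeffs star_prod_lin_coeffs_left lin_coeffs_def)

lemma sr_sym_lin_coeffs_commute:
  "sr_sym (lin_coeffs c d) = star_prod (lin_coeffs (qcnj c) (qcnj d)) (lin_coeffs c d)"
  by (auto simp: fun_eq_iff sr_sym_lin_coeffs star_prod_lin_coeffs_left lin_coeffs_def
      quat_eq_iff algebra_simps)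

lemma sr_sym_lin_coeffs_Reals: "sr_sym (lin_coeffs c d) n \<in> \<real>"
  by (simp add: sr_sym_lin_coeffs quat_in_Reals_iff algebra_simps)

lemma sr_sym_lin_coeffs_vanish: "\<forall>k>2. sr_sym (lin_coeffs c d) k = 0"
  by (simp add: sr_sym_lin_coeffs)

lemma star_prod_eq_fps_mult: "star_prod a b = fps_nth (Abs_fps a * Abs_fps b)"
  by (simp add: fun_eq_iff star_prod_def fps_mult_nth atLeast0AtMost)

lemma star_prod_assoc: "star_prod (star_prod a b) c = star_prod a (star_prod b c)"
  by (simp add: star_prod_eq_fps_mult fps_nth_inverse mult.assoc)

lemma star_prod_one_right: "star_prod a (fps_nth 1) = a"
  by (simp add: star_prod_eq_fps_mult fps_nth_inverse fun_eq_iff)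

lemma star_prod_lin_coeffs_geometric:
  assumes "d \<noteq> 0"
  shows "star_prod (lin_coeffs c d) (\<lambda>n. (- (inverse d * c)) ^ n * inverse d) = fps_nth 1"
proof
  fix n
  show "star_prod (lin_coeffs c d) (\<lambda>n. (- (inverse d * c)) ^ n * inverse d) n = fps_nth 1 n"
  proof (cases n)
    case (Suc k)
    have "d * (- (inverse d * c)) ^ Suc k * inverse d =
        - (c * (- (inverse d * c)) ^ k * inverse d)"
      using assms by (simp add: mult.assoc flip: mult.assoc[of d])
    then show ?thesis using Suc by (simp add: star_prod_lin_coeffs_left mult.assoc)
  qed (simp add: star_prod_lin_coeffs_left assms)
qed

lemma summable_powser_geometric:
  fixes q m y :: quat
  assumes "norm m < 1" and "norm q \<le> 1"
  shows "summable (\<lambda>n. q ^ n * (m ^ n * y))"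
proof (rule summable_comparison_test')
  show "summable (\<lambda>n. norm m ^ n * norm y)"
    using assms(1) by (intro summable_mult2 summable_geometric) simp
  show "norm (q ^ n * (m ^ n * y)) \<le> norm m ^ n * norm y" for n
    using assms(2) by (simp add: norm_mult norm_power mult_left_le_one_le power_le_one)
qed

lemma lin_coeffs_star_inverse_exists:
  assumes cd: "norm c < norm d"
  shows "\<exists>g. slice_regular_B g \<and>
    (\<forall>q. norm q < 1 \<and> sr_eval (sr_sym (lin_coeffs c d)) q \<noteq> 0 \<longrightarrow>
       sr_eval g q =
         inverse (sr_eval (sr_sym (lin_coeffs c d)) q) * sr_eval (sr_cnj (lin_coeffs c d)) q)"
proof (intro exI conjI allI impI)
  let ?S = "sr_sym (lin_coeffs c d)"
  have d: "d \<noteq> 0" using cd by auto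
  define g where "g n = (- (inverse d * c)) ^ n * inverse d" for n
  have "norm (- (inverse d * c)) = norm c / norm d"
    by (simp add: norm_mult norm_inverse divide_inverse_commute)
  then have "norm (- (inverse d * c)) < 1"
    using cd by (simp add: divide_less_eq_1)
  then have summable: "summable (\<lambda>n. q ^ n * g n)" if "norm q < 1" for q
    unfolding g_def using that by (intro summable_powser_geometric) auto
  then show "slice_regular_B g" by (simp add: slice_regular_B_def)
  \<comment> \<open>\<open>g\<close> is the \<open>*\<close>-inverse of \<open>\<ell> = lin_coeffs c d\<close>;
    as \<open>\<ell>\<^sup>s = \<ell>\<^sup>c * \<ell>\<close>, associativity gives \<open>\<ell>\<^sup>s * g = \<ell>\<^sup>c\<close>\<close>
  have "star_prod (lin_coeffs c d) g = fps_nth 1"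
    unfolding g_def by (rule star_prod_lin_coeffs_geometric[OF d])
  then have "star_prod ?S g = sr_cnj (lin_coeffs c d)"
    by (simp add: sr_sym_lin_coeffs_commute star_prod_assoc star_prod_one_right
        sr_cnj_lin_coeffs)
  fix q assume q: "norm q < 1 \<and> sr_eval ?S q \<noteq> 0"
  have "(\<lambda>n. q ^ n * ?S n) sums (\<Sum>k\<le>2. q ^ k * ?S k)"
    by (rule powser_finite_sums[OF sr_sym_lin_coeffs_vanish])
  moreover have "(\<lambda>n. q ^ n * star_prod ?S g n) sums ((\<Sum>k\<le>2. q ^ k * ?S k) * sr_eval g q)"
    using summable q sr_sym_lin_coeffs_Reals
    by (intro star_prod_sums_left sr_sym_lin_coeffs_vanish)
      (auto simp: sr_eval_def summable_sums Reals_mult_commute)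
  ultimately have "sr_eval (sr_cnj (lin_coeffs c d)) q = sr_eval ?S q * sr_eval g q"
    using \<open>star_prod ?S g = _\<close> by (simp add: sr_eval_def sums_iff)
  then show "sr_eval g q = inverse (sr_eval ?S q) * sr_eval (sr_cnj (lin_coeffs c d)) q"
    using q by (simp flip: mult.assoc)
qed

lemma star_inv_lin_coeffs:
  assumes "norm c < norm d"
  shows "slice_regular_B (star_inv (lin_coeffs c d))"
    and "norm q < 1 \<Longrightarrow> sr_eval (sr_sym (lin_coeffs c d)) q \<noteq> 0 \<Longrightarrow>
      sr_eval (star_inv (lin_coeffs c d)) q =
        inverse (sr_eval (sr_sym (lin_coeffs c d)) q) * sr_eval (sr_cnj (lin_coeffs c d)) q"
  using someI_ex[OF lin_coeffs_star_inverse_exists[OF assms]] unfolding star_inv_def by blast+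

lemma regular_mobius_sums:
  assumes "norm c < norm d" and "norm q < 1"
  defines "G \<equiv> sr_eval (star_inv (lin_coeffs c d)) q"
  shows "(\<lambda>n. q ^ n * star_prod (star_inv (lin_coeffs c d)) (lin_coeffs a b) n)
      sums (G * b + q * G * a)"
    and "regular_mobius (a, c, b, d) q = G * b + q * G * a"
proof -
  have "(\<lambda>n. q ^ n * star_inv (lin_coeffs c d) n) sums G"
    using star_inv_lin_coeffs(1)[OF assms(1)] assms(2)
    by (simp add: G_def slice_regular_B_def sr_eval_def summable_sums)
  moreover have "(\<Sum>k\<le>1. q ^ k * G * lin_coeffs a b k) = G * b + q * G * a"
    by (simp add: lin_coeffs_def)
  ultimately show sums: "(\<lambda>n. q ^ n * star_prod (star_inv (lin_coeffs c d)) (lin_coeffs a b) n)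
      sums (G * b + q * G * a)"
    using star_prod_sums_right[OF _ lin_coeffs_vanish] by metis
  then show "regular_mobius (a, c, b, d) q = G * b + q * G * a"
    by (simp add: sr_eval_def sums_iff)
qed

lemma mobius_denominator_nonzero:
  fixes c d q :: quat
  assumes "norm c < norm d" and "norm q \<le> 1"
  shows "q * c + d \<noteq> 0"
proof
  assume "q * c + d = 0"
  then have "norm d = norm q * norm c"
    by (metis add.inverse_unique norm_minus_cancel norm_mult)
  also have "\<dots> \<le> norm c" using assms(2) by (simp add: mult_left_le_one_le)
  finally show False using assms(1) by simp
qed

lemma regular_mobius_eq_classical_mobius:
  assumes "c \<in> \<real>" "d \<in> \<real>" and cd: "norm c < norm d" and q: "norm q < 1"
  shows "regular_mobius (a, c, b, d) q = classical_mobius (a, c, b, d) q"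
proof -
  obtain \<gamma> \<delta> where c: "c = of_real \<gamma>" and d: "d = of_real \<delta>"
    using assms(1,2) by (auto elim!: Reals_cases)
  define P where "P = q * c + d"
  have P: "P \<noteq> 0" unfolding P_def using cd q by (intro mobius_denominator_nonzero) auto
  let ?S = "sr_sym (lin_coeffs c d)"
  have "(\<lambda>n. q ^ n * ?S n) sums (\<Sum>k\<le>2. q ^ k * ?S k)"
    by (rule powser_finite_sums[OF sr_sym_lin_coeffs_vanish])
  also have "(\<Sum>k\<le>2. q ^ k * ?S k) = P * P"
    by (simp add: numeral_2_eq_2 sr_sym_lin_coeffs P_def c d quat_eq_iff algebra_simps)
  finally have "sr_eval ?S q = P * P"
    by (simp add: sr_eval_def sums_iff)
  moreover have "sr_eval (sr_cnj (lin_coeffs c d)) q = P"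
    by (simp add: sr_cnj_lin_coeffs sr_eval_lin_coeffs P_def c d quat_eq_iff)
  ultimately have "sr_eval (star_inv (lin_coeffs c d)) q = inverse P"
    using star_inv_lin_coeffs(2)[OF cd q] P by (simp add: nonzero_inverse_mult_distrib mult.assoc)
  moreover have "q * inverse P = inverse P * q"
    by (rule mult_commute_imp_mult_inverse_commute[symmetric])
      (simp add: P_def c d quat_eq_iff algebra_simps)
  ultimately show ?thesis
    using regular_mobius_sums(2)[OF cd q] by (simp add: P_def distrib_left mult.assoc add.commute)
qed

lemma Sp11_iff:
  "(a, c, b, d) \<in> Sp11 \<longleftrightarrow>
     qcnj a * a - qcnj b * b = 1 \<and> qcnj a * c - qcnj b * d = 0 \<and>
     qcnj c * a - qcnj d * b = 0 \<and> qcnj c * c - qcnj d * d = - 1"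
  by (simp add: Sp11_def I11_def algebra_simps)

lemma Sp11_norms:
  assumes "(a, c, b, d) \<in> Sp11"
  shows "(norm a)\<^sup>2 = 1 + (norm b)\<^sup>2" and "(norm d)\<^sup>2 = 1 + (norm c)\<^sup>2" and "norm c < norm d"
proof -
  have "of_real ((norm a)\<^sup>2 - (norm b)\<^sup>2) = (of_real 1 :: quat)"
    "of_real ((norm c)\<^sup>2 - (norm d)\<^sup>2) = (of_real (- 1) :: quat)"
    using assms by (simp_all add: Sp11_iff qcnj_mult_self)
  then show "(norm a)\<^sup>2 = 1 + (norm b)\<^sup>2" and d: "(norm d)\<^sup>2 = 1 + (norm c)\<^sup>2"
    unfolding of_real_eq_iff by simp_all
  from d show "norm c < norm d"
    by (simp add: power_less_imp_less_base[of "norm c" 2 "norm d"])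
qed

lemma classical_mobius_mult_right:
  "classical_mobius (a * u, c, b * u, d) q = classical_mobius (a, c, b, d) q * u"
  by (simp add: mult.assoc distrib_right)

lemma classical_mobius_scaleR:
  assumes "r \<noteq> 0"
  shows "classical_mobius (r *\<^sub>R A) = classical_mobius A"
proof -
  obtain a c b d where "A = (a, c, b, d)" by (cases A) auto
  with assms show ?thesis
    by (simp add: fun_eq_iff inverse_scaleR_distrib flip: scaleR_add_right)
qed

lemma Sp11_Reals_denominator:
  assumes "(a, of_real \<gamma>, b, of_real \<delta>) \<in> Sp11"
  shows "\<delta>\<^sup>2 = 1 + \<gamma>\<^sup>2" and "\<exists>u. norm u = 1 \<and> a = \<delta> *\<^sub>R u \<and> b = \<gamma> *\<^sub>R u"
proof -
  note norms = Sp11_norms[OF assms]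
  show \<delta>: "\<delta>\<^sup>2 = 1 + \<gamma>\<^sup>2" using norms(2) by simp
  then have "\<delta> \<noteq> 0" by (auto simp: add_nonneg_eq_0_iff)
  have "\<gamma> *\<^sub>R a = \<delta> *\<^sub>R b"
    using assms by (simp add: Sp11_iff scaleR_conv_of_real qcnj_def quat_eq_iff)
  define u where "u = (1 / \<delta>) *\<^sub>R a"
  have a: "a = \<delta> *\<^sub>R u" using \<open>\<delta> \<noteq> 0\<close> by (simp add: u_def)
  have "b = (1 / \<delta>) *\<^sub>R (\<delta> *\<^sub>R b)" using \<open>\<delta> \<noteq> 0\<close> by simp
  then have b: "b = \<gamma> *\<^sub>R u"
    by (simp add: u_def flip: \<open>\<gamma> *\<^sub>R a = \<delta> *\<^sub>R b\<close>)
  have "\<delta>\<^sup>2 * (norm u)\<^sup>2 = 1 + \<gamma>\<^sup>2 * (norm u)\<^sup>2"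
    using norms(1) by (simp add: a b power_mult_distrib)
  with \<delta> have "(norm u)\<^sup>2 = 1" by (simp add: algebra_simps)
  with a b show "\<exists>u. norm u = 1 \<and> a = \<delta> *\<^sub>R u \<and> b = \<gamma> *\<^sub>R u"
    using norm_ge_zero[of u] by (intro exI[of _ u]) (auto simp: power2_eq_1_iff)
qed

lemma classical_mobius_Hmat_form_if_Reals:
  assumes Sp: "(a, c, b, d) \<in> Sp11" and "c \<in> \<real>" "d \<in> \<real>"
  shows "\<exists>t u. norm u = 1 \<and>
    (\<forall>q. classical_mobius (a, c, b, d) q = classical_mobius (Hmat t) q * u)"
proof -
  obtain \<gamma> \<delta> where c: "c = of_real \<gamma>" and d: "d = of_real \<delta>"
    using assms(2,3) by (auto elim!: Reals_cases)
  note Sp' = Sp[unfolded c d]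
  obtain u where u: "norm u = 1" "a = \<delta> *\<^sub>R u" "b = \<gamma> *\<^sub>R u"
    using Sp11_Reals_denominator(2)[OF Sp'] by blast
  have \<delta>: "\<delta>\<^sup>2 = 1 + \<gamma>\<^sup>2" by (rule Sp11_Reals_denominator(1)[OF Sp'])
  \<comment> \<open>rescaling by \<open>sgn \<delta>\<close> makes the diagonal entries \<open>cosh t > 0\<close> and does not change \<open>F\<^sub>A\<close>\<close>
  define \<sigma> where "\<sigma> = sgn \<delta>"
  define t where "t = arsinh (\<sigma> * \<gamma>)"
  have "\<sigma> \<noteq> 0" "\<sigma>\<^sup>2 = 1" using \<delta> by (auto simp: \<sigma>_def sgn_real_def add_nonneg_eq_0_iff)
  have "cosh t = sqrt (\<delta>\<^sup>2)"
    using \<open>\<sigma>\<^sup>2 = 1\<close> by (simp add: t_def cosh_arsinh_real \<delta> power_mult_distrib add.commute)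
  then have "cosh t = \<sigma> * \<delta>" by (simp add: \<sigma>_def abs_sgn)
  then have "Hmat t = \<sigma> *\<^sub>R (of_real \<delta>, of_real \<gamma>, of_real \<gamma>, of_real \<delta>)"
    by (simp add: Hmat_def qof_real_eq_of_real t_def scaleR_conv_of_real)
  then have "classical_mobius (Hmat t) =
      classical_mobius (of_real \<delta>, of_real \<gamma>, of_real \<gamma>, of_real \<delta>)"
    using classical_mobius_scaleR[OF \<open>\<sigma> \<noteq> 0\<close>, of "(of_real \<delta>, of_real \<gamma>, of_real \<gamma>, of_real \<delta>)"]
    by simp
  moreover have "classical_mobius (a, c, b, d) q =
      classical_mobius (of_real \<delta>, of_real \<gamma>, of_real \<gamma>, of_real \<delta>) q * u" for q
    using classical_mobius_mult_right[of "of_real \<delta>" u "of_real \<gamma>" "of_real \<gamma>" "of_real \<delta>"]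
    by (simp only: c d u(2,3) scaleR_conv_of_real)
  ultimately show ?thesis using u(1) by metis
qed

lemma classical_mobius_powser_coeffs:
  assumes cd: "norm c < norm d"
    and h: "\<forall>p. norm p < 1 \<longrightarrow> (\<lambda>n. p ^ n * h n) sums classical_mobius (a, c, b, d) p"
    and q: "norm q < 1"
  shows "star_prod (lin_coeffs (q * c) d) (\<lambda>n. q ^ n * h n) = lin_coeffs (q * a) b"
proof
  fix n
  let ?L = "star_prod (lin_coeffs (q * c) d) (\<lambda>n. q ^ n * h n)"
  let ?F = "classical_mobius (a, c, b, d)"
  have "(\<lambda>n. of_real t ^ n * (?L n - lin_coeffs (q * a) b n)) sums 0" if t: "\<bar>t\<bar> < 1" for t
  proof -
    define x :: quat where "x = of_real t"
    define p where "p = x * q"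
    have "norm p < 1"
      using mult_strict_mono'[OF t q] by (simp add: p_def x_def norm_mult)
    have "p ^ n = t ^ n *\<^sub>R q ^ n" for n
      unfolding p_def x_def scaleR_conv_of_real[symmetric] by (rule scaleR_power)
    then have "p ^ n * h n = x ^ n * (q ^ n * h n)" for n
      by (simp add: x_def scaleR_conv_of_real mult.assoc)
    moreover have "(\<lambda>n. p ^ n * h n) sums ?F p"
      using h \<open>norm p < 1\<close> by blast
    ultimately have "(\<lambda>n. x ^ n * (q ^ n * h n)) sums ?F p"
      by simp
    then have "(\<lambda>n. x ^ n * ?L n) sums ((\<Sum>k\<le>1. x ^ k * lin_coeffs (q * c) d k) * ?F p)"
      by (rule star_prod_sums_left[OF _ lin_coeffs_vanish])
        (simp add: x_def Reals_mult_commute[of "of_real t"])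
    also have "(\<Sum>k\<le>1. x ^ k * lin_coeffs (q * c) d k) = p * c + d"
      by (simp add: lin_coeffs_def p_def mult.assoc add.commute)
    also have "(p * c + d) * ?F p = p * a + b"
      using mobius_denominator_nonzero[OF cd, of p] \<open>norm p < 1\<close> by (simp flip: mult.assoc)
    finally have "(\<lambda>n. x ^ n * ?L n - x ^ n * lin_coeffs (q * a) b n) sums (p * a + b - (p * a + b))"
      using lin_coeffs_sums[of x "q * a" b]
      by (intro sums_diff) (simp_all add: p_def mult.assoc add.commute)
    then show ?thesis by (simp add: x_def right_diff_distrib)
  qed
  then have "?L n - lin_coeffs (q * a) b n = 0"
    by (intro quat_powser_eq_0[of 1]) auto
  then show "?L n = lin_coeffs (q * a) b n" by simp
qed

lemma Reals_denominator_if_coeff_identities: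
  fixes h0 h1 h2 :: quat
  assumes Sp: "(a, c, b, d) \<in> Sp11"
    and E0: "d * h0 = b"
    and E1: "\<And>q. norm q < 1 \<Longrightarrow> d * (q * h1) + q * c * h0 = q * a"
    and E2: "\<And>q. norm q < 1 \<Longrightarrow> d * (q\<^sup>2 * h2) + q * c * (q * h1) = 0"
  shows "c \<in> \<real>" and "d \<in> \<real>"
proof -
  note norms = Sp11_norms[OF Sp]
  have half: "norm ((1 / 2 :: real) *\<^sub>R (1 :: quat)) < 1" by simp
  have "(1 / 2 :: real) *\<^sub>R (d * h1 + c * h0) = (1 / 2 :: real) *\<^sub>R a"
    using E1[OF half] by (simp add: scaleR_right_distrib)
  then have K1: "d * h1 = a - c * h0" by (simp add: eq_diff_eq)
  have "(1 / 4 :: real) *\<^sub>R (d * h2 + c * h1) = 0"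
    using E2[OF half] by (simp add: scaleR_right_distrib power2_eq_square)
  then have K2: "d * h2 = - (c * h1)" by (simp add: eq_neg_iff_add_eq_0)
  have h1: "h1 \<noteq> 0"
  proof
    assume "h1 = 0"
    then have "norm a = norm c * norm h0" using K1 by (simp add: norm_mult)
    also have "\<dots> \<le> norm d * norm h0" using norms(3) by (simp add: mult_right_mono)
    also have "\<dots> = norm b" using E0 by (auto simp: norm_mult)
    finally have "(norm a)\<^sup>2 \<le> (norm b)\<^sup>2" by (simp add: power_mono)
    with norms(1) show False by simp
  qed
  show d: "d \<in> \<real>"
  proof (rule quat_in_Reals_if_commute)
    fix q :: quat assume q: "norm q < 1"
    have "d * q * h1 = q * a - q * c * h0" using E1[OF q] by (simp add: mult.assoc eq_diff_eq)
    also have "\<dots> = q * (d * h1)" by (simp add: K1 right_diff_distrib mult.assoc)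
    finally have "(d * q - q * d) * h1 = 0" by (simp add: left_diff_distrib mult.assoc)
    then show "d * q = q * d" using h1 by simp
  qed
  show "c \<in> \<real>"
  proof (rule quat_in_Reals_if_commute)
    fix q :: quat assume q: "norm q < 1"
    have "q * c * q * h1 = - (d * (q\<^sup>2 * h2))"
      using E2[OF q] by (simp add: mult.assoc eq_neg_iff_add_eq_0 add.commute)
    also have "\<dots> = - (q\<^sup>2 * (d * h2))"
      using Reals_mult_commute[OF d, of "q\<^sup>2"] by (simp flip: mult.assoc)
    also have "\<dots> = q\<^sup>2 * (c * h1)" by (simp add: K2)
    finally have "q * ((c * q - q * c) * h1) = 0"
      by (simp add: algebra_simps power2_eq_square)
    then show "c * q = q * c" using h1 by (cases "q = 0") auto
  qed
qed

lemma Reals_denominator_if_classical_mobius_powser: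
  assumes Sp: "(a, c, b, d) \<in> Sp11"
    and h: "\<forall>p. norm p < 1 \<longrightarrow> (\<lambda>n. p ^ n * h n) sums classical_mobius (a, c, b, d) p"
  shows "c \<in> \<real>" and "d \<in> \<real>"
proof -
  have coeff: "star_prod (lin_coeffs (q * c) d) (\<lambda>n. q ^ n * h n) n = lin_coeffs (q * a) b n"
    if "norm q < 1" for q n
    using classical_mobius_powser_coeffs[OF Sp11_norms(3)[OF Sp] h that] by simp
  have "d * h 0 = b"
    using coeff[of 0 0] by (simp add: star_prod_lin_coeffs_left lin_coeffs_def)
  moreover have "d * (q * h 1) + q * c * h 0 = q * a" if "norm q < 1" for q
    using coeff[OF that, of 1] by (simp add: star_prod_lin_coeffs_left lin_coeffs_def)
  moreover have "d * (q\<^sup>2 * h 2) + q * c * (q * h 1) = 0" if "norm q < 1" for q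
    using coeff[OF that, of 2]
    by (simp add: star_prod_lin_coeffs_left lin_coeffs_def numeral_2_eq_2)
  ultimately show "c \<in> \<real>" and "d \<in> \<real>"
    using Reals_denominator_if_coeff_identities[OF Sp] by blast+
qed

definition Hmat_diag :: "real \<Rightarrow> quat \<Rightarrow> qmat2" where
  "Hmat_diag t u = qmat_mult (Hmat t) (u, 0, 0, 1)"

lemma Hmat_diag_eq:
  "Hmat_diag t u = (of_real (cosh t) * u, of_real (sinh t), of_real (sinh t) * u, of_real (cosh t))"
  by (simp add: Hmat_diag_def Hmat_def qof_real_eq_of_real)

lemma Hmat_diag_in_Sp11:
  assumes "norm u = 1"
  shows "Hmat_diag t u \<in> Sp11"
proof -
  define C S :: quat where "C = of_real (cosh t)" and "S = of_real (sinh t)"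
  have "(cosh t)\<^sup>2 - (sinh t)\<^sup>2 = 1" "(sinh t)\<^sup>2 - (cosh t)\<^sup>2 = - 1"
    using hyperbolic_pythagoras[of t] by simp_all
  then have "qcnj (C * u) * (C * u) - qcnj (S * u) * (S * u) = 1"
    and "qcnj S * S - qcnj C * C = - 1"
    using assms by (simp_all add: C_def S_def qcnj_mult_self norm_mult power_mult_distrib
        flip: of_real_diff of_real_power)
  moreover have "qcnj (C * u) * S - qcnj (S * u) * C = 0" "qcnj S * (C * u) - qcnj C * (S * u) = 0"
    by (simp_all add: C_def S_def quat_eq_iff algebra_simps)
  ultimately show ?thesis
    by (simp add: Hmat_diag_eq Sp11_iff flip: C_def S_def)
qed

lemma classical_mobius_Hmat_diag:
  "classical_mobius (Hmat_diag t u) q = classical_mobius (Hmat t) q * u"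
  unfolding Hmat_diag_eq Hmat_def qof_real_eq_of_real by (rule classical_mobius_mult_right)

lemma regular_mobius_Hmat_diag:
  assumes "norm q < 1"
  shows "regular_mobius (Hmat_diag t u) q = classical_mobius (Hmat t) q * u"
proof -
  have "\<bar>sinh t\<bar> < cosh t"
    using sinh_less_cosh_real[of "\<bar>t\<bar>"] by simp
  then have "regular_mobius (Hmat_diag t u) q = classical_mobius (Hmat_diag t u) q"
    unfolding Hmat_diag_eq using assms by (intro regular_mobius_eq_classical_mobius) auto
  then show ?thesis by (simp only: classical_mobius_Hmat_diag)
qed

lemma classical_mobius_Hmat_form_if_regular:
  assumes "A \<in> Sp11" "A' \<in> Sp11"
    and eq: "\<And>p. norm p < 1 \<Longrightarrow> classical_mobius A p = regular_mobius A' p"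
  shows "\<exists>t u. norm u = 1 \<and> classical_mobius A = (\<lambda>q. classical_mobius (Hmat t) q * u)"
proof -
  obtain a c b d a' c' b' d' where A: "A = (a, c, b, d)" and A': "A' = (a', c', b', d')"
    by (cases A, cases A') auto
  have cd': "norm c' < norm d'" using Sp11_norms(3) assms(2) A' by simp
  have "(\<lambda>n. p ^ n * star_prod (star_inv (lin_coeffs c' d')) (lin_coeffs a' b') n)
      sums classical_mobius A p" if "norm p < 1" for p
    unfolding eq[OF that] A' regular_mobius_sums(2)[OF cd' that]
    by (rule regular_mobius_sums(1)[OF cd' that])
  then have "c \<in> \<real>" "d \<in> \<real>"
    using Reals_denominator_if_classical_mobius_powser assms(1) A by blast+
  then show ?thesis
    using classical_mobius_Hmat_form_if_Reals assms(1) A by (simp add: fun_eq_iff)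
qed

theorem corollary3p2:
  shows "{restrict (classical_mobius A) (ball 0 1) | A. A \<in> Sp11}
           \<inter> {restrict (regular_mobius A) (ball 0 1) | A. A \<in> Sp11}
         = {restrict (\<lambda>q. classical_mobius (Hmat t) q * u) (ball 0 1) | t u. norm u = 1}"
proof (intro set_eqI iffI)
  fix f
  assume "f \<in> {restrict (classical_mobius A) (ball 0 1) | A. A \<in> Sp11}
           \<inter> {restrict (regular_mobius A) (ball 0 1) | A. A \<in> Sp11}"
  then obtain A A' where "A \<in> Sp11" "A' \<in> Sp11"
    and f: "f = restrict (classical_mobius A) (ball 0 1)" "f = restrict (regular_mobius A') (ball 0 1)"
    by blast
  moreover have "classical_mobius A p = regular_mobius A' p" if "norm p < 1" for p
    using fun_cong[OF trans[OF f(1)[symmetric] f(2)], of p] that by simp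
  ultimately obtain t u
    where "norm u = 1" "classical_mobius A = (\<lambda>q. classical_mobius (Hmat t) q * u)"
    using classical_mobius_Hmat_form_if_regular by blast
  with f(1) show "f \<in> {restrict (\<lambda>q. classical_mobius (Hmat t) q * u) (ball 0 1) | t u. norm u = 1}"
    by auto
next
  fix f
  assume "f \<in> {restrict (\<lambda>q. classical_mobius (Hmat t) q * u) (ball 0 1) | t u. norm u = 1}"
  then obtain t u where f: "f = restrict (\<lambda>q. classical_mobius (Hmat t) q * u) (ball 0 1)"
    and "norm u = 1" by blast
  then have "Hmat_diag t u \<in> Sp11"
    and "f = restrict (classical_mobius (Hmat_diag t u)) (ball 0 1)"
    and "f = restrict (regular_mobius (Hmat_diag t u)) (ball 0 1)"
    by (auto simp: Hmat_diag_in_Sp11 classical_mobius_Hmat_diag regular_mobius_Hmat_diag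
        intro!: restrict_ext)
  then show "f \<in> {restrict (classical_mobius A) (ball 0 1) | A. A \<in> Sp11}
           \<inter> {restrict (regular_mobius A) (ball 0 1) | A. A \<in> Sp11}"
    by blast
qed

end
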